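(* In the single expert committee under liquid democracy, there is a neutral strategy profile that maximizes the probability that the outcome matches the state among all neutral strategy profiles and under which (1) the expert votes sincerely, and (2) $1\le v_e\le\min\{\lfloor w^*\rfloor,\ (N+1)/2\}$, where $v_e$ is the number of votes the expert holds and $w^*=\log\big(\tfrac{r}{1-r}\big)/\log\big(\tfrac{q}{1-q}\big)$.
   Context: Single expert committee: $N$ voters with $N$ odd, all independent (payoff 1 if the outcome matches the state, $A$ with $a$ and $B$ with $b$, else 0); $N-1$ nonexperts of precision $q\in(1/2,1)$ and one expert $e$ of precision $r\in(q,1)$; prior $\Pr(\omega=a)=1/2$ for state $\omega\in\{a,b\}$; voter $i$ observes private signal $s_i$ with $\Pr(s_i=\omega\mid\omega)=q_i$, conditionally independent; precisions are common knowledge. Outcome: simple majority of votes cast, ties broken uniformly at random. Liquid democracy: each voter maps her signal to vote $A$, vote $B$, abstain, or delegate to another voter; delegation is transitive, votes in a delegation cycle are abstained, and a non-delegator casts all votes she holds (own plus delegated) for the same alternative or abstains them all. A strategy profile is neutral if each voter votes sincerely ($a$ at signal $a$, $b$ at signal $b$), abstains at both signals, or delegates to the same voter at both signals. The number of votes a voter holds is her own vote (if she does not delegate) plus all votes delegated to her directly or transitively. *)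

theory Defs
  imports Complex_Main
begin

text \<open>Voters are 0, ..., N-1. A neutral strategy of a voter is one of:
  vote sincerely (a at signal a, b at signal b), abstain at both signals,
  or delegate to the same voter j at both signals.\<close>

datatype action = Sincere | Abstain | Deleg nat

definition is_deleg :: "action \<Rightarrow> bool" where
  "is_deleg x = (case x of Deleg _ \<Rightarrow> True | _ \<Rightarrow> False)"

definition neutral :: "nat \<Rightarrow> (nat \<Rightarrow> action) \<Rightarrow> bool" where
  "neutral N s = (\<forall>i<N. \<forall>j. s i = Deleg j \<longrightarrow> j < N \<and> j \<noteq> i)"

definition dstep :: "(nat \<Rightarrow> action) \<Rightarrow> nat \<Rightarrow> nat" where
  "dstep s i = (case s i of Deleg j \<Rightarrow> j | _ \<Rightarrow> i)"

text \<open>After N steps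
  the chain has either reached a non-delegator (where it stays) or is trapped in a
  delegation cycle (in which case the endpoint is a delegator and the vote is abstained).\<close>
definition final :: "nat \<Rightarrow> (nat \<Rightarrow> action) \<Rightarrow> nat \<Rightarrow> nat" where
  "final N s i = (dstep s ^^ N) i"

definition held :: "nat \<Rightarrow> (nat \<Rightarrow> action) \<Rightarrow> nat \<Rightarrow> nat" where
  "held N s j = card {i \<in> {0..<N}. i \<noteq> j \<and> (\<exists>k\<le>N. (dstep s ^^ k) i = j)}
                + (if is_deleg (s j) then 0 else 1)"

text \<open>Given the set S of voters who received signal a: votes cast for A and for B.\<close>
definition votesA :: "nat \<Rightarrow> (nat \<Rightarrow> action) \<Rightarrow> nat set \<Rightarrow> nat" where
  "votesA N s S = card {i \<in> {0..<N}. s (final N s i) = Sincere \<and> final N s i \<in> S}"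

definition votesB :: "nat \<Rightarrow> (nat \<Rightarrow> action) \<Rightarrow> nat set \<Rightarrow> nat" where
  "votesB N s S = card {i \<in> {0..<N}. s (final N s i) = Sincere \<and> final N s i \<notin> S}"

text \<open>Probability that alternative A (resp. B) is chosen: simple majority of votes
  cast, ties broken uniformly at random.\<close>
definition winA :: "nat \<Rightarrow> nat \<Rightarrow> real" where
  "winA x y = (if x > y then 1 else if x = y then 1/2 else 0)"

definition prec :: "nat \<Rightarrow> real \<Rightarrow> real \<Rightarrow> nat \<Rightarrow> real" where
  "prec e q r i = (if i = e then r else q)"

text \<open>Probability of the signal profile in which exactly the voters in S observe a,
  given the state (True = state a, False = state b).\<close>
definition sigprob :: "nat \<Rightarrow> nat \<Rightarrow> real \<Rightarrow> real \<Rightarrow> bool \<Rightarrow> nat set \<Rightarrow> real" where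
  "sigprob N e q r \<omega> S =
     (\<Prod>i\<in>{0..<N}. if (i \<in> S) = \<omega> then prec e q r i else 1 - prec e q r i)"

text \<open>Probability that the outcome matches the state (prior 1/2 on each state).\<close>
definition success :: "nat \<Rightarrow> nat \<Rightarrow> real \<Rightarrow> real \<Rightarrow> (nat \<Rightarrow> action) \<Rightarrow> real" where
  "success N e q r s =
     (1/2) * (\<Sum>S\<in>Pow {0..<N}. sigprob N e q r True S * winA (votesA N s S) (votesB N s S))
   + (1/2) * (\<Sum>S\<in>Pow {0..<N}. sigprob N e q r False S * winA (votesB N s S) (votesA N s S))"

end

(*
  Every vote of a neutral profile ends with a voter who casts it sincerely or is lost, so the
  success probability depends only on the weights w j (votes cast by j) and equals the accuracy
  of the weighted majority with these weights.  Pairing each signal profile S with the profile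
  in which the voters of positive weight observe the opposite signals (a Neyman-Pearson
  argument) shows that, among weights supported on the expert and a set Q, a weighted majority
  following the sign of the log-likelihood ratio is best.  Giving the expert c votes and each
  voter of Q one vote does so whenever |logit r - c logit q| <= logit q and no ties can occur,
  e.g. for c = floor w* and |Q| = N - c.  If the support is too large for this, giving the
  expert all remaining votes is still best among the admissible weights.  An expert with more
  than half of the votes is a dictator, so her weight can be capped at (N + 1) / 2.  Hence the
  best of the finitely many profiles in which the expert and a set Q vote sincerely and all
  others delegate to the expert is optimal among all neutral profiles.
*)
theory Submission
  imports Defs
begin

lemma winA_swap: "winA y x = 1 - winA x y"
  by (auto simp: winA_def)

lemma winA_bounds: "0 \<le> winA x y" "winA x y \<le> 1"
  by (auto simp: winA_def)

lemma sum_nonpos_by_involution: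
  fixes p d :: "'a \<Rightarrow> real"
  assumes "finite A"
    and "\<And>x. x \<in> A \<Longrightarrow> \<phi> x \<in> A" and "\<And>x. \<phi> (\<phi> x) = x"
    and "\<And>x. d (\<phi> x) = - d x"
    and "\<And>x. x \<in> A \<Longrightarrow> d x * (p x - p (\<phi> x)) \<le> 0"
  shows "(\<Sum>x \<in> A. p x * d x) \<le> 0"
proof -
  have "(\<Sum>x \<in> A. p x * d x) = (\<Sum>x \<in> A. p (\<phi> x) * d (\<phi> x))"
    by (rule sum.reindex_bij_witness[of _ \<phi> \<phi>]) (use assms in auto)
  then have "2 * (\<Sum>x \<in> A. p x * d x) = (\<Sum>x \<in> A. p x * d x + p (\<phi> x) * d (\<phi> x))"
    by (simp add: sum.distrib)
  also have "\<dots> = (\<Sum>x \<in> A. d x * (p x - p (\<phi> x)))"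
    by (simp add: assms(4) algebra_simps)
  also have "\<dots> \<le> 0"
    by (rule sum_nonpos) (rule assms(5))
  finally show ?thesis
    by simp
qed

lemma vote_margin_nonneg:
  fixes x y :: nat and l d :: real
  assumes "y < x" and "0 \<le> l" and "- l \<le> d"
  shows "0 \<le> (real x - real y) * l + d"
proof -
  have "1 * l \<le> (real x - real y) * l"
    using assms(1,2) by (intro mult_right_mono) auto
  then show ?thesis
    using assms(3) by simp
qed

lemma vote_margin_nonpos:
  fixes x y :: nat and l d :: real
  assumes "x < y" and "0 \<le> l" and "d \<le> l"
  shows "(real x - real y) * l + d \<le> 0"
  using vote_margin_nonneg[of x y l "- d"] assms by (simp add: algebra_simps)

lemma abs_diff_mult_le:
  fixes a b :: real and F c :: nat
  assumes "F * a \<le> b" and "b \<le> (real F + 1) * a" and "c = F \<or> c = F + 1"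
  shows "\<bar>b - c * a\<bar> \<le> a"
proof -
  have "b \<le> F * a + a"
    using assms(2) by (simp add: distrib_right)
  then show ?thesis
    using assms(1,3) by (auto simp: abs_le_iff distrib_right)
qed

lemma nat_floor_divide_bounds:
  fixes a b :: real
  assumes "0 < a" and "a < b"
  shows "1 \<le> nat \<lfloor>b / a\<rfloor>" and "nat \<lfloor>b / a\<rfloor> * a \<le> b"
    and "b \<le> (real (nat \<lfloor>b / a\<rfloor>) + 1) * a"
proof -
  have "1 \<le> b / a"
    using assms by simp
  then have "1 \<le> \<lfloor>b / a\<rfloor>"
    by linarith
  then show "1 \<le> nat \<lfloor>b / a\<rfloor>"
    by (simp add: le_nat_iff)
  have "real (nat \<lfloor>b / a\<rfloor>) = of_int \<lfloor>b / a\<rfloor>"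
    using \<open>1 \<le> \<lfloor>b / a\<rfloor>\<close> by simp
  moreover have "of_int \<lfloor>b / a\<rfloor> \<le> b / a" and "b / a \<le> of_int \<lfloor>b / a\<rfloor> + 1"
    by linarith+
  ultimately show "nat \<lfloor>b / a\<rfloor> * a \<le> b" and "b \<le> (real (nat \<lfloor>b / a\<rfloor>) + 1) * a"
    by (simp_all only: pos_le_divide_eq[OF assms(1)] pos_divide_le_eq[OF assms(1)])
qed

lemma dstep_less:
  assumes "neutral N s" and "i < N"
  shows "dstep s i < N"
proof (cases "s i")
  case (Deleg j)
  then have "j < N"
    using assms unfolding neutral_def by blast
  then show ?thesis
    using Deleg by (simp add: dstep_def)
qed (simp_all add: dstep_def assms)

lemma funpow_dstep_less: "neutral N s \<Longrightarrow> i < N \<Longrightarrow> (dstep s ^^ k) i < N"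
  by (induction k) (simp_all add: dstep_less)

lemma final_less: "neutral N s \<Longrightarrow> i < N \<Longrightarrow> final N s i < N"
  unfolding final_def by (rule funpow_dstep_less)

definition weight :: "nat \<Rightarrow> (nat \<Rightarrow> action) \<Rightarrow> nat \<Rightarrow> nat" where
  "weight N s j = (if s j = Sincere then card {i \<in> {0..<N}. final N s i = j} else 0)"

definition tally :: "nat \<Rightarrow> (nat \<Rightarrow> nat) \<Rightarrow> nat set \<Rightarrow> nat" where
  "tally N w T = (\<Sum>j \<in> {0..<N} \<inter> T. w j)"

lemma card_final_sincere:
  assumes "neutral N s"
  shows "card {i \<in> {0..<N}. s (final N s i) = Sincere \<and> final N s i \<in> T}
           = tally N (weight N s) T"
proof -
  let ?I = "{i \<in> {0..<N}. s (final N s i) = Sincere \<and> final N s i \<in> T}"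
  have "final N s ` ?I \<subseteq> {0..<N}"
    using final_less[OF assms] by auto
  then have "card ?I = (\<Sum>j \<in> {0..<N}. card {i \<in> ?I. final N s i = j})"
    using sum.group[of ?I "{0..<N}" "final N s" "\<lambda>_. 1::nat"] by simp
  also have "\<dots> = (\<Sum>j \<in> {0..<N} \<inter> T. weight N s j)"
  proof (rule sum.mono_neutral_cong_right)
    have "{i \<in> ?I. final N s i = j} = {}" if "j \<notin> T" for j
      using that by auto
    then show "\<forall>j \<in> {0..<N} - {0..<N} \<inter> T. card {i \<in> ?I. final N s i = j} = 0"
      by auto
    show "card {i \<in> ?I. final N s i = j} = weight N s j" if "j \<in> {0..<N} \<inter> T" for j
    proof (cases "s j = Sincere")
      case True
      then have "{i \<in> ?I. final N s i = j} = {i \<in> {0..<N}. final N s i = j}"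
        using that by auto
      then show ?thesis
        using True by (simp add: weight_def)
    next
      case False
      then have "{i \<in> ?I. final N s i = j} = {}"
        by auto
      then show ?thesis
        using False by (simp add: weight_def)
    qed
  qed auto
  finally show ?thesis
    unfolding tally_def .
qed

lemma votesA_eq_tally: "neutral N s \<Longrightarrow> votesA N s S = tally N (weight N s) S"
  using card_final_sincere[of N s S] by (simp add: votesA_def)

lemma votesB_eq_tally: "neutral N s \<Longrightarrow> votesB N s S = tally N (weight N s) (- S)"
  using card_final_sincere[of N s "- S"] by (simp add: votesB_def)

lemma tally_weight_le:
  assumes "neutral N s"
  shows "tally N (weight N s) UNIV \<le> N"
proof -
  have "card {i \<in> {0..<N}. s (final N s i) = Sincere \<and> final N s i \<in> UNIV} \<le> card {0..<N}"
    by (rule card_mono) auto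
  then show ?thesis
    using card_final_sincere[OF assms, of UNIV] by simp
qed

lemma tally_add_compl: "tally N w T + tally N w (- T) = tally N w UNIV"
  unfolding tally_def by (subst sum.union_disjoint[symmetric]) (auto intro: sum.cong)

lemma tally_eq_tally_Int:
  assumes "\<forall>j \<in> {0..<N} - B. w j = 0"
  shows "tally N w T = tally N w (B \<inter> T)"
  unfolding tally_def by (rule sum.mono_neutral_right) (use assms in force)+

definition majority_A :: "nat \<Rightarrow> (nat \<Rightarrow> nat) \<Rightarrow> nat set \<Rightarrow> real" where
  "majority_A N w S = winA (tally N w S) (tally N w (- S))"

definition accuracy :: "nat \<Rightarrow> nat \<Rightarrow> real \<Rightarrow> real \<Rightarrow> (nat \<Rightarrow> nat) \<Rightarrow> real" where
  "accuracy N e q r w = (\<Sum>S \<in> Pow {0..<N}. sigprob N e q r True S * majority_A N w S)"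

lemma sigprob_False: "sigprob N e q r False S = sigprob N e q r True ({0..<N} - S)"
  unfolding sigprob_def by (rule prod.cong) auto

lemma sigprob_pos:
  assumes "0 < q" "q < 1" "0 < r" "r < 1"
  shows "0 < sigprob N e q r \<omega> S"
  unfolding sigprob_def by (rule prod_pos) (use assms in \<open>auto simp: prec_def\<close>)

lemma success_eq_accuracy:
  assumes "neutral N s"
  shows "success N e q r s = accuracy N e q r (weight N s)"
proof -
  let ?A = "{0..<N}" and ?w = "weight N s"
  have compl: "tally N ?w (- (?A - S)) = tally N ?w S" "tally N ?w (?A - S) = tally N ?w (- S)" for S
    unfolding tally_def by (rule sum.cong; auto)+
  have "(\<Sum>S \<in> Pow ?A. sigprob N e q r False S * winA (votesB N s S) (votesA N s S))
      = (\<Sum>S \<in> Pow ?A. sigprob N e q r True (?A - S) * majority_A N ?w (?A - S))"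
    by (simp add: sigprob_False votesA_eq_tally[OF assms] votesB_eq_tally[OF assms] majority_A_def compl
        del: Compl_Diff_eq)
  also have "\<dots> = accuracy N e q r ?w"
    unfolding accuracy_def
    by (rule sum.reindex_bij_witness[of _ "\<lambda>S. ?A - S" "\<lambda>S. ?A - S"]) auto
  finally show ?thesis
    unfolding success_def accuracy_def
    by (simp add: votesA_eq_tally[OF assms] votesB_eq_tally[OF assms] majority_A_def)
qed

lemma majority_A_bounds: "0 \<le> majority_A N w S" "majority_A N w S \<le> 1"
  unfolding majority_A_def by (rule winA_bounds)+

lemma majority_A_sym_diff:
  assumes "\<forall>j \<in> {0..<N} - B. w j = 0"
  shows "majority_A N w (sym_diff S B) = 1 - majority_A N w S"
proof -
  have "tally N w (sym_diff S B) = tally N w (B \<inter> sym_diff S B)"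
    by (rule tally_eq_tally_Int[OF assms])
  also have "B \<inter> sym_diff S B = B \<inter> - S"
    by blast
  also have "tally N w (B \<inter> - S) = tally N w (- S)"
    by (rule tally_eq_tally_Int[OF assms, symmetric])
  finally have A: "tally N w (sym_diff S B) = tally N w (- S)" .
  have "tally N w (- sym_diff S B) = tally N w (B \<inter> - sym_diff S B)"
    by (rule tally_eq_tally_Int[OF assms])
  also have "B \<inter> - sym_diff S B = B \<inter> S"
    by blast
  also have "tally N w (B \<inter> S) = tally N w S"
    by (rule tally_eq_tally_Int[OF assms, symmetric])
  finally have B: "tally N w (- sym_diff S B) = tally N w S" .
  show ?thesis
    unfolding majority_A_def A B by (rule winA_swap)
qed

definition logit :: "real \<Rightarrow> real" where
  "logit p = ln (p / (1 - p))"

lemma logit_pos: "1/2 < p \<Longrightarrow> p < 1 \<Longrightarrow> 0 < logit p"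
  unfolding logit_def by simp

lemma logit_less: "0 < p \<Longrightarrow> p < p' \<Longrightarrow> p' < 1 \<Longrightarrow> logit p < logit p'"
  unfolding logit_def by (simp add: frac_less2 frac_less)

definition loglik_ratio :: "nat \<Rightarrow> real \<Rightarrow> real \<Rightarrow> nat set \<Rightarrow> nat set \<Rightarrow> real" where
  "loglik_ratio e q r B S =
     (\<Sum>i \<in> B. if i \<in> S then logit (prec e q r i) else - logit (prec e q r i))"

lemma ln_sigprob_sym_diff:
  assumes "0 < q" "q < 1" "0 < r" "r < 1" and "B \<subseteq> {0..<N}"
  shows "ln (sigprob N e q r True S) - ln (sigprob N e q r True (sym_diff S B))
           = loglik_ratio e q r B S"
proof -
  define f where "f T i = (if i \<in> T then prec e q r i else 1 - prec e q r i)" for T i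
  have pos: "0 < prec e q r i" "0 < 1 - prec e q r i" for i
    using assms by (auto simp: prec_def)
  have ln_sigprob: "ln (sigprob N e q r True T) = (\<Sum>i \<in> {0..<N}. ln (f T i))" for T
    unfolding sigprob_def f_def eq_True
  proof (rule ln_prod)
    show "(if i \<in> T then prec e q r i else 1 - prec e q r i) \<noteq> 0" for i
      using pos[of i] by simp
  qed simp
  have "(\<Sum>i \<in> {0..<N}. ln (f S i) - ln (f (sym_diff S B) i)) = loglik_ratio e q r B S"
    unfolding loglik_ratio_def
  proof (rule sum.mono_neutral_cong_right)
    show "\<forall>i \<in> {0..<N} - B. ln (f S i) - ln (f (sym_diff S B) i) = 0"
      by (auto simp: f_def)
    show "ln (f S i) - ln (f (sym_diff S B) i)
            = (if i \<in> S then logit (prec e q r i) else - logit (prec e q r i))" if "i \<in> B" for i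
      using that pos[of i] by (auto simp: f_def logit_def ln_div)
  qed (use assms in auto)
  then show ?thesis
    by (simp add: ln_sigprob sum_subtractf)
qed

lemma sigprob_sym_diff_le_iff:
  assumes "0 < q" "q < 1" "0 < r" "r < 1" and "B \<subseteq> {0..<N}"
  shows "sigprob N e q r True (sym_diff S B) \<le> sigprob N e q r True S
           \<longleftrightarrow> 0 \<le> loglik_ratio e q r B S"
    and "sigprob N e q r True S \<le> sigprob N e q r True (sym_diff S B)
           \<longleftrightarrow> loglik_ratio e q r B S \<le> 0"
  using ln_sigprob_sym_diff[OF assms, of e S]
  by (auto simp: sigprob_pos[OF assms(1-4)] simp flip: ln_le_cancel_iff)

lemma accuracy_le_by_loglik_ratio:
  assumes "0 < q" "q < 1" "0 < r" "r < 1" and "B \<subseteq> {0..<N}"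
    and "\<forall>j \<in> {0..<N} - B. w j = 0" and "\<forall>j \<in> {0..<N} - B. v j = 0"
    and follows_llr: "\<And>S. S \<subseteq> {0..<N} \<Longrightarrow> majority_A N w S \<noteq> majority_A N v S \<Longrightarrow>
           majority_A N v S = 1 \<and> 0 \<le> loglik_ratio e q r B S
         \<or> majority_A N v S = 0 \<and> loglik_ratio e q r B S \<le> 0"
  shows "accuracy N e q r w \<le> accuracy N e q r v"
proof -
  let ?p = "sigprob N e q r True" and ?d = "\<lambda>S. majority_A N w S - majority_A N v S"
  have "(\<Sum>S \<in> Pow {0..<N}. ?p S * ?d S) \<le> 0"
  proof (rule sum_nonpos_by_involution[where \<phi> = "\<lambda>S. sym_diff S B"])
    show "sym_diff S B \<in> Pow {0..<N}" if "S \<in> Pow {0..<N}" for S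
      using that assms(5) by auto
    show "sym_diff (sym_diff S B) B = S" for S
      by auto
    show "?d (sym_diff S B) = - ?d S" for S
      using assms(6,7) by (simp add: majority_A_sym_diff)
    show "?d S * (?p S - ?p (sym_diff S B)) \<le> 0" if "S \<in> Pow {0..<N}" for S
    proof (cases "?d S = 0")
      case False
      with follows_llr[of S] that
      consider "majority_A N v S = 1" "0 \<le> loglik_ratio e q r B S"
        | "majority_A N v S = 0" "loglik_ratio e q r B S \<le> 0"
        by auto
      then show ?thesis
      proof cases
        case 1
        then show ?thesis
          using majority_A_bounds[of N w S] sigprob_sym_diff_le_iff(1)[OF assms(1-5)]
          by (simp add: mult_nonpos_nonneg)
      next
        case 2
        then show ?thesis
          using majority_A_bounds[of N w S] sigprob_sym_diff_le_iff(2)[OF assms(1-5)]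
          by (simp add: mult_nonneg_nonpos)
      qed
    qed simp
  qed simp
  then show ?thesis
    unfolding accuracy_def by (simp add: sum_subtractf right_diff_distrib)
qed

definition expert_weights :: "nat \<Rightarrow> nat \<Rightarrow> nat set \<Rightarrow> nat \<Rightarrow> nat" where
  "expert_weights e c Q j = (if j = e then c else if j \<in> Q then 1 else 0)"

lemma tally_expert_weights:
  assumes "e < N" and "Q \<subseteq> {0..<N} - {e}"
  shows "tally N (expert_weights e c Q) T = (if e \<in> T then c else 0) + card (Q \<inter> T)"
proof -
  have "tally N (expert_weights e c Q) T
      = (\<Sum>j \<in> {0..<N} \<inter> T. (if j = e then c else 0) + of_bool (j \<in> Q))"
    unfolding tally_def expert_weights_def by (rule sum.cong) (use assms in auto)
  also have "\<dots> = (if e \<in> T then c else 0) + card ({0..<N} \<inter> T \<inter> Q)"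
    using assms(1) by (simp add: sum.distrib Int_def)
  also have "{0..<N} \<inter> T \<inter> Q = Q \<inter> T"
    using assms(2) by blast
  finally show ?thesis .
qed

lemma tally_expert_weights_le:
  assumes "Q \<subseteq> {0..<N} - {e}" and "e \<notin> T" and "\<forall>j \<in> Q. 1 \<le> w j"
  shows "tally N (expert_weights e c Q) T \<le> tally N w T"
proof -
  have "tally N (expert_weights e c Q) T = (\<Sum>j \<in> Q \<inter> T. 1)"
    unfolding tally_def expert_weights_def
    by (rule sum.mono_neutral_cong_right) (use assms in auto)
  also have "\<dots> \<le> (\<Sum>j \<in> Q \<inter> T. w j)"
    by (rule sum_mono) (use assms(3) in auto)
  also have "\<dots> \<le> tally N w T"
    unfolding tally_def by (rule sum_mono2) (use assms(1) in auto)
  finally show ?thesis .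
qed

lemma loglik_ratio_insert:
  assumes "e \<notin> Q" and "finite Q"
  shows "loglik_ratio e q r (insert e Q) S
           = (if e \<in> S then logit r else - logit r)
             + (real (card (Q \<inter> S)) - real (card (Q - S))) * logit q"
proof -
  have "(\<Sum>i \<in> Q. if i \<in> S then logit (prec e q r i) else - logit (prec e q r i))
      = (\<Sum>i \<in> Q. if i \<in> S then logit q else - logit q)"
    by (rule sum.cong) (use assms(1) in \<open>auto simp: prec_def\<close>)
  also have "\<dots> = (real (card (Q \<inter> S)) - real (card (Q - S))) * logit q"
    using assms(2) by (simp add: sum.If_cases Diff_eq algebra_simps)
  finally show ?thesis
    unfolding loglik_ratio_def using assms by (simp add: prec_def)
qed

lemma loglik_ratio_expert_weights:
  assumes "e < N" and "Q \<subseteq> {0..<N} - {e}"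
  shows "loglik_ratio e q r (insert e Q) S
           = (real (tally N (expert_weights e c Q) S) - real (tally N (expert_weights e c Q) (- S)))
               * logit q
             + (if e \<in> S then logit r - c * logit q else c * logit q - logit r)"
proof -
  have "e \<notin> Q" and "finite Q"
    using assms(2) finite_subset by auto
  moreover have "Q \<inter> - S = Q - S"
    by blast
  ultimately show ?thesis
    using assms by (simp add: loglik_ratio_insert tally_expert_weights algebra_simps)
qed

lemma loglik_ratio_expert_weights_sign:
  fixes c :: nat and r :: real and S :: "nat set"
  assumes "e < N" and "Q \<subseteq> {0..<N} - {e}" and "0 \<le> logit q"
  defines "v \<equiv> expert_weights e c Q"
    and "\<delta> \<equiv> if e \<in> S then logit r - c * logit q else c * logit q - logit r"
  shows "tally N v (- S) < tally N v S \<Longrightarrow> - logit q \<le> \<delta>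
           \<Longrightarrow> 0 \<le> loglik_ratio e q r (insert e Q) S"
    and "tally N v S < tally N v (- S) \<Longrightarrow> \<delta> \<le> logit q
           \<Longrightarrow> loglik_ratio e q r (insert e Q) S \<le> 0"
proof -
  have llr: "loglik_ratio e q r (insert e Q) S
      = (real (tally N v S) - real (tally N v (- S))) * logit q + \<delta>"
    unfolding v_def \<delta>_def by (rule loglik_ratio_expert_weights[OF assms(1,2)])
  show "0 \<le> loglik_ratio e q r (insert e Q) S"
    if "tally N v (- S) < tally N v S" and "- logit q \<le> \<delta>"
    unfolding llr using that(1) assms(3) that(2) by (rule vote_margin_nonneg)
  show "loglik_ratio e q r (insert e Q) S \<le> 0"
    if "tally N v S < tally N v (- S)" and "\<delta> \<le> logit q"
    unfolding llr using that(1) assms(3) that(2) by (rule vote_margin_nonpos)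
qed

lemma tally_compl_less_of_expert_weights:
  assumes "e < N" and "Q \<subseteq> {0..<N} - {e}" and "c + card Q = N"
    and "\<forall>j \<in> Q. 1 \<le> w j" and "tally N w UNIV \<le> N" and "e \<notin> T"
    and "tally N (expert_weights e c Q) (- T) < tally N (expert_weights e c Q) T"
  shows "tally N w (- T) < tally N w T"
proof -
  have "tally N (expert_weights e c Q) T \<le> tally N w T"
    by (rule tally_expert_weights_le[OF assms(2,6,4)])
  moreover have "tally N (expert_weights e c Q) T + tally N (expert_weights e c Q) (- T) = N"
    using tally_add_compl[of N "expert_weights e c Q" T] tally_expert_weights[OF assms(1,2), of c UNIV]
      assms(3) by simp
  moreover have "tally N w T + tally N w (- T) \<le> N"
    using tally_add_compl[of N w T] assms(5) by simp
  ultimately show ?thesis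
    using assms(7) by linarith
qed

lemma accuracy_le_expert_weights:
  assumes "e < N" and "Q \<subseteq> {0..<N} - {e}" and "0 < q" "q < 1" "0 < r" "r < 1"
    and "odd (c + card Q)" and "\<bar>logit r - c * logit q\<bar> \<le> logit q"
    and "\<forall>j \<in> {0..<N} - insert e Q. w j = 0"
  shows "accuracy N e q r w \<le> accuracy N e q r (expert_weights e c Q)"
proof (rule accuracy_le_by_loglik_ratio[where B = "insert e Q"])
  let ?v = "expert_weights e c Q"
  show "insert e Q \<subseteq> {0..<N}"
    using assms(1,2) by auto
  show "\<forall>j \<in> {0..<N} - insert e Q. ?v j = 0"
    by (simp add: expert_weights_def)
  fix S
  let ?x = "tally N ?v S" and ?y = "tally N ?v (- S)"
  have "?x + ?y = c + card Q"
    using tally_add_compl[of N ?v S] tally_expert_weights[OF assms(1,2), of c UNIV] by simp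
  then have "?x \<noteq> ?y"
    using assms(7) by presburger
  have "0 \<le> logit q"
    and lower: "- logit q \<le> (if e \<in> S then logit r - c * logit q else c * logit q - logit r)"
    and upper: "(if e \<in> S then logit r - c * logit q else c * logit q - logit r) \<le> logit q"
    using assms(8) by auto
  note sign = loglik_ratio_expert_weights_sign[OF assms(1,2) \<open>0 \<le> logit q\<close>]
  show "majority_A N ?v S = 1 \<and> 0 \<le> loglik_ratio e q r (insert e Q) S
      \<or> majority_A N ?v S = 0 \<and> loglik_ratio e q r (insert e Q) S \<le> 0"
  proof (cases "?y < ?x")
    case True
    then show ?thesis
      using sign(1) lower by (simp add: majority_A_def winA_def)
  next
    case False
    then have "?x < ?y"
      using \<open>?x \<noteq> ?y\<close> by simp
    then show ?thesis
      using sign(2) upper by (simp add: majority_A_def winA_def)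
  qed
qed (use assms in auto)

lemma accuracy_le_expert_weights_all_votes:
  assumes "e < N" and "Q \<subseteq> {0..<N} - {e}" and "0 < q" "q < 1" "0 < r" "r < 1"
    and "0 < logit q" and "odd N" and "c + card Q = N" and "(real c - 1) * logit q \<le> logit r"
    and "\<forall>j \<in> {0..<N} - insert e Q. w j = 0" and "\<forall>j \<in> Q. 1 \<le> w j"
    and "tally N w UNIV \<le> N"
  shows "accuracy N e q r w \<le> accuracy N e q r (expert_weights e c Q)"
proof (rule accuracy_le_by_loglik_ratio[where B = "insert e Q"])
  let ?v = "expert_weights e c Q"
  show "insert e Q \<subseteq> {0..<N}"
    using assms(1,2) by auto
  show "\<forall>j \<in> {0..<N} - insert e Q. ?v j = 0"
    by (simp add: expert_weights_def)
  fix S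
  assume differ: "majority_A N w S \<noteq> majority_A N ?v S"
  let ?x = "tally N ?v S" and ?y = "tally N ?v (- S)"
  have "?x + ?y = N"
    using tally_add_compl[of N ?v S] tally_expert_weights[OF assms(1,2), of c UNIV] assms(9) by simp
  then have "?x \<noteq> ?y"
    using assms(8) by presburger
  have "- logit q \<le> logit r - c * logit q"
    using assms(10) by (simp add: algebra_simps)
  note sign = loglik_ratio_expert_weights_sign[OF assms(1,2) less_imp_le[OF assms(7)]]
  note same_majority = tally_compl_less_of_expert_weights[OF assms(1,2,9,12,13)]
  \<comment> \<open>Where the majority side of v lacks the expert, w has the same majority.\<close>
  show "majority_A N ?v S = 1 \<and> 0 \<le> loglik_ratio e q r (insert e Q) S
      \<or> majority_A N ?v S = 0 \<and> loglik_ratio e q r (insert e Q) S \<le> 0"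
  proof (cases "?y < ?x")
    case True
    have "e \<in> S"
    proof (rule ccontr)
      assume "e \<notin> S"
      then have "tally N w (- S) < tally N w S"
        using True by (rule same_majority)
      with True differ show False
        by (simp add: majority_A_def winA_def)
    qed
    with True show ?thesis
      using sign(1) \<open>- logit q \<le> logit r - c * logit q\<close> by (simp add: majority_A_def winA_def)
  next
    case False
    then have "?x < ?y"
      using \<open>?x \<noteq> ?y\<close> by simp
    have "e \<notin> S"
    proof
      assume "e \<in> S"
      then have "tally N w S < tally N w (- S)"
        using same_majority[of "- S"] \<open>?x < ?y\<close> by simp
      with \<open>?x < ?y\<close> differ show False
        by (simp add: majority_A_def winA_def)
    qed
    with \<open>?x < ?y\<close> show ?thesis
      using sign(2) \<open>- logit q \<le> logit r - c * logit q\<close> by (simp add: majority_A_def winA_def)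
  qed
qed (use assms in auto)

lemma exists_expert_weights_ge_of_small_support:
  assumes "odd N" and "e < N" and "0 < q" "q < 1" "0 < r" "r < 1"
    and "1 \<le> F" and "F * logit q \<le> logit r" and "logit r \<le> (F + 1) * logit q"
    and "Q \<subseteq> {0..<N} - {e}" and "F < N - card Q"
    and "\<forall>j \<in> {0..<N} - insert e Q. w j = 0"
  shows "\<exists>Q' \<subseteq> {0..<N} - {e}. card Q' = N - F
           \<and> accuracy N e q r w \<le> accuracy N e q r (expert_weights e F Q')"
proof -
  define c where "c = (if odd (F + card Q) then F else F + 1)"
  have w_le: "accuracy N e q r w \<le> accuracy N e q r (expert_weights e c Q)"
    using abs_diff_mult_le[OF assms(8,9)]
    by (intro accuracy_le_expert_weights[OF assms(2,10,3-6) _ _ assms(12)]) (auto simp: c_def)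
  have "card Q \<le> N - F" and "N - F \<le> card ({0..<N} - {e})"
    using assms(2,7,11) by simp_all
  then have "\<exists>Q'. Q \<subseteq> Q' \<and> Q' \<subseteq> {0..<N} - {e} \<and> card Q' = N - F"
    by (intro exists_subset_between[OF _ _ assms(10)]) simp_all
  then obtain Q' where "Q \<subseteq> Q'" and Q': "Q' \<subseteq> {0..<N} - {e}" and "card Q' = N - F"
    by blast
  have "accuracy N e q r (expert_weights e c Q) \<le> accuracy N e q r (expert_weights e F Q')"
  proof (rule accuracy_le_expert_weights[OF assms(2) Q' assms(3-6)])
    show "odd (F + card Q')"
      using \<open>card Q' = N - F\<close> assms(1,11) by simp
    show "\<bar>logit r - F * logit q\<bar> \<le> logit q"
      using abs_diff_mult_le[OF assms(8,9)] by simp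
    show "\<forall>j \<in> {0..<N} - insert e Q'. expert_weights e c Q j = 0"
      using \<open>Q \<subseteq> Q'\<close> by (auto simp: expert_weights_def)
  qed
  then show ?thesis
    using Q' \<open>card Q' = N - F\<close> w_le by (intro exI[of _ Q']) simp
qed

lemma exists_expert_weights_ge:
  assumes "odd N" and "e < N" and "0 < q" "q < 1" "0 < r" "r < 1" and "0 < logit q"
    and "1 \<le> F" and "F * logit q \<le> logit r" and "logit r \<le> (F + 1) * logit q"
    and "tally N w UNIV \<le> N"
  shows "\<exists>Q \<subseteq> {0..<N} - {e}. N - card Q \<le> F
           \<and> accuracy N e q r w \<le> accuracy N e q r (expert_weights e (N - card Q) Q)"
proof -
  define Q where "Q = {j \<in> {0..<N} - {e}. 0 < w j}"
  have Q: "Q \<subseteq> {0..<N} - {e}"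
    unfolding Q_def by blast
  have "card Q < N"
    using card_mono[OF _ Q] assms(2) by simp
  have w_support: "\<forall>j \<in> {0..<N} - insert e Q. w j = 0" and "\<forall>j \<in> Q. 1 \<le> w j"
    unfolding Q_def by auto
  show ?thesis
  proof (cases "N - card Q \<le> F")
    case True
    have "(real (N - card Q) - 1) * logit q \<le> real F * logit q"
      using True assms(7) by (intro mult_right_mono) auto
    then have "(real (N - card Q) - 1) * logit q \<le> logit r"
      using assms(9) by linarith
    then have "accuracy N e q r w \<le> accuracy N e q r (expert_weights e (N - card Q) Q)"
      using \<open>card Q < N\<close> \<open>\<forall>j \<in> Q. 1 \<le> w j\<close>
      by (intro accuracy_le_expert_weights_all_votes[OF assms(2) Q assms(3-7,1) _ _ w_support _ assms(11)])
        simp_all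
    with Q True show ?thesis
      by (intro exI[of _ Q]) simp
  next
    case False
    then obtain Q' where "Q' \<subseteq> {0..<N} - {e}" and "card Q' = N - F"
      and "accuracy N e q r w \<le> accuracy N e q r (expert_weights e F Q')"
      using exists_expert_weights_ge_of_small_support[OF assms(1-6,8-10) Q _ w_support] by auto
    moreover have "N - card Q' = F"
      using \<open>card Q' = N - F\<close> False by simp
    ultimately show ?thesis
      by (intro exI[of _ Q']) simp
  qed
qed

lemma majority_A_expert_dictator:
  assumes "e < N" and "Q \<subseteq> {0..<N} - {e}" and "card Q < c"
  shows "majority_A N (expert_weights e c Q) S = (if e \<in> S then 1 else 0)"
proof -
  have "finite Q"
    using assms(2) finite_subset by blast
  then have "card (Q \<inter> S) \<le> card Q" and "card (Q \<inter> - S) \<le> card Q"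
    by (simp_all add: card_mono)
  then show ?thesis
    using assms(3) by (simp add: majority_A_def winA_def tally_expert_weights[OF assms(1,2)])
qed

lemma accuracy_expert_dictator:
  assumes "e < N" and "Q \<subseteq> {0..<N} - {e}" "card Q < c" and "Q' \<subseteq> {0..<N} - {e}" "card Q' < c'"
  shows "accuracy N e q r (expert_weights e c Q) = accuracy N e q r (expert_weights e c' Q')"
  unfolding accuracy_def using assms by (simp add: majority_A_expert_dictator)

lemma exists_expert_weights_ge_capped:
  assumes "odd N" and "e < N" and "0 < q" "q < 1" "0 < r" "r < 1" and "0 < logit q"
    and "1 \<le> F" and "F * logit q \<le> logit r" and "logit r \<le> (F + 1) * logit q"
    and "tally N w UNIV \<le> N"
  shows "\<exists>Q \<subseteq> {0..<N} - {e}. N - card Q \<le> F \<and> N - card Q \<le> (N + 1) div 2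
           \<and> accuracy N e q r w \<le> accuracy N e q r (expert_weights e (N - card Q) Q)"
proof -
  obtain Q where Q: "Q \<subseteq> {0..<N} - {e}" and "N - card Q \<le> F"
    and le: "accuracy N e q r w \<le> accuracy N e q r (expert_weights e (N - card Q) Q)"
    using exists_expert_weights_ge[OF assms] by blast
  show ?thesis
  proof (cases "N - card Q \<le> (N + 1) div 2")
    case True
    then show ?thesis
      using Q \<open>N - card Q \<le> F\<close> le by blast
  next
    case False
    obtain k where N: "N = 2 * k + 1"
      using assms(1) by (rule oddE)
    obtain Q' where Q': "Q' \<subseteq> {0..<N} - {e}" and "card Q' = k"
      by (rule obtain_subset_with_card_n[of k "{0..<N} - {e}"]) (use assms(2) N in auto)
    have "accuracy N e q r (expert_weights e (N - card Q) Q)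
        = accuracy N e q r (expert_weights e (N - card Q') Q')"
      using False \<open>card Q' = k\<close> N by (intro accuracy_expert_dictator[OF assms(2) Q _ Q']) simp_all
    then show ?thesis
      using Q' le False \<open>N - card Q \<le> F\<close> \<open>card Q' = k\<close> N by (intro exI[of _ Q']) simp
  qed
qed

definition expert_profile :: "nat \<Rightarrow> nat set \<Rightarrow> nat \<Rightarrow> action" where
  "expert_profile e Q j = (if j = e \<or> j \<in> Q then Sincere else Deleg e)"

lemma neutral_expert_profile: "e < N \<Longrightarrow> neutral N (expert_profile e Q)"
  unfolding neutral_def expert_profile_def by simp

lemma funpow_dstep_expert_profile:
  "(dstep (expert_profile e Q) ^^ k) i = (if k = 0 \<or> i = e \<or> i \<in> Q then i else e)"
  by (induction k) (simp_all add: dstep_def expert_profile_def)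

lemma weight_expert_profile:
  assumes "e < N" and "Q \<subseteq> {0..<N} - {e}"
  shows "weight N (expert_profile e Q) = expert_weights e (N - card Q) Q"
proof
  fix j
  have final: "final N (expert_profile e Q) i = (if i = e \<or> i \<in> Q then i else e)" for i
    using assms(1) by (simp add: final_def funpow_dstep_expert_profile)
  have "{i \<in> {0..<N}. final N (expert_profile e Q) i = e} = {0..<N} - Q"
    using assms by (auto simp: final)
  moreover have "{i \<in> {0..<N}. final N (expert_profile e Q) i = j} = {j}" if "j \<in> Q"
    using assms that by (auto simp: final)
  moreover have "card ({0..<N} - Q) = N - card Q"
    using assms(2) by (subst card_Diff_subset) (auto intro: finite_subset)
  ultimately show "weight N (expert_profile e Q) j = expert_weights e (N - card Q) Q j"
    by (simp add: weight_def expert_weights_def expert_profile_def)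
qed

lemma held_expert_profile:
  assumes "e < N" and "Q \<subseteq> {0..<N} - {e}"
  shows "held N (expert_profile e Q) e = N - card Q"
proof -
  have "{i \<in> {0..<N}. i \<noteq> e \<and> (\<exists>k \<le> N. (dstep (expert_profile e Q) ^^ k) i = e)}
      = {0..<N} - insert e Q"
    using assms by (auto simp: funpow_dstep_expert_profile intro: exI[of _ 1])
  moreover have "finite Q" and "e \<notin> Q"
    using assms(2) finite_subset by auto
  moreover have "card ({0..<N} - insert e Q) = N - card (insert e Q)"
    using assms \<open>finite Q\<close> by (subst card_Diff_subset) auto
  moreover have "card (insert e Q) \<le> N"
    using assms card_mono[of "{0..<N}" "insert e Q"] by auto
  ultimately show ?thesis
    by (simp add: held_def is_deleg_def expert_profile_def)
qed

lemma exists_expert_profile_ge: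
  assumes "odd N" and "e < N" and "0 < q" "q < 1" "0 < r" "r < 1" and "0 < logit q"
    and "1 \<le> F" and "F * logit q \<le> logit r" and "logit r \<le> (F + 1) * logit q"
    and "neutral N s"
  shows "\<exists>Q \<subseteq> {0..<N} - {e}. N - card Q \<le> F \<and> N - card Q \<le> (N + 1) div 2
           \<and> success N e q r s \<le> success N e q r (expert_profile e Q)"
proof -
  obtain Q where Q: "Q \<subseteq> {0..<N} - {e}" and "N - card Q \<le> F" "N - card Q \<le> (N + 1) div 2"
    and "accuracy N e q r (weight N s) \<le> accuracy N e q r (expert_weights e (N - card Q) Q)"
    using exists_expert_weights_ge_capped[OF assms(1-10) tally_weight_le[OF assms(11)]] by blast
  then show ?thesis
    using assms(2,11)
    by (intro exI[of _ Q])
      (simp add: success_eq_accuracy neutral_expert_profile weight_expert_profile)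
qed

lemma exists_optimal_expert_profile:
  assumes "odd N" and "e < N" and "0 < q" "q < 1" "0 < r" "r < 1" and "0 < logit q"
    and "1 \<le> F" and "F * logit q \<le> logit r" and "logit r \<le> (F + 1) * logit q"
  obtains Q where "Q \<subseteq> {0..<N} - {e}" and "N - card Q \<le> F" and "N - card Q \<le> (N + 1) div 2"
    and "\<And>s. neutral N s \<Longrightarrow> success N e q r s \<le> success N e q r (expert_profile e Q)"
proof -
  define C where "C = {Q. Q \<subseteq> {0..<N} - {e} \<and> N - card Q \<le> F \<and> N - card Q \<le> (N + 1) div 2}"
  have "finite C"
    by (rule finite_subset[of _ "Pow {0..<N}"]) (auto simp: C_def)
  moreover have "{0..<N} - {e} \<in> C"
    using assms(2,8) by (simp add: C_def)
  ultimately obtain Q0 where "is_arg_min (\<lambda>Q. - success N e q r (expert_profile e Q)) (\<lambda>Q. Q \<in> C) Q0"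
    using ex_is_arg_min_if_finite by blast
  then have "Q0 \<in> C" and Q0_max: "\<And>Q. Q \<in> C \<Longrightarrow>
      success N e q r (expert_profile e Q) \<le> success N e q r (expert_profile e Q0)"
    by (auto simp: is_arg_min_linorder)
  have "success N e q r s \<le> success N e q r (expert_profile e Q0)" if s: "neutral N s" for s
  proof -
    obtain Q where "Q \<in> C" and "success N e q r s \<le> success N e q r (expert_profile e Q)"
      using exists_expert_profile_ge[OF assms s] unfolding C_def by blast
    then show ?thesis
      using Q0_max by (meson order_trans)
  qed
  with \<open>Q0 \<in> C\<close> show ?thesis
    using that unfolding C_def by blast
qed

theorem lemma5:
  fixes N e :: nat and q r :: real
  assumes "odd N" and "e < N"
    and "1/2 < q" and "q < r" and "r < 1"
  shows "\<exists>s. neutral N s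
           \<and> (\<forall>s'. neutral N s' \<longrightarrow> success N e q r s' \<le> success N e q r s)
           \<and> s e = Sincere
           \<and> 1 \<le> held N s e
           \<and> int (held N s e) \<le> \<lfloor>ln (r / (1 - r)) / ln (q / (1 - q))\<rfloor>
           \<and> held N s e \<le> (N + 1) div 2"
proof -
  have prob: "0 < q" "q < 1" "0 < r" "r < 1" and "0 < logit q" and "logit q < logit r"
    using assms(3-5) by (simp_all add: logit_pos logit_less)
  define F where "F = nat \<lfloor>logit r / logit q\<rfloor>"
  note F_bounds = nat_floor_divide_bounds[OF \<open>0 < logit q\<close> \<open>logit q < logit r\<close>, folded F_def]
  obtain Q where Q: "Q \<subseteq> {0..<N} - {e}" and "N - card Q \<le> F" and "N - card Q \<le> (N + 1) div 2"
    and optimal: "\<And>s. neutral N s \<Longrightarrow> success N e q r s \<le> success N e q r (expert_profile e Q)"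
    using exists_optimal_expert_profile[OF assms(1,2) prob \<open>0 < logit q\<close> F_bounds] by blast
  have "card Q < N"
    using card_mono[OF _ Q] assms(2) by simp
  moreover have "int (N - card Q) \<le> \<lfloor>logit r / logit q\<rfloor>"
    using \<open>N - card Q \<le> F\<close> F_bounds(1) unfolding F_def by (simp add: le_nat_iff)
  ultimately show ?thesis
    unfolding logit_def[symmetric] using assms(2) optimal \<open>N - card Q \<le> (N + 1) div 2\<close>
    by (intro exI[of _ "expert_profile e Q"])
      (simp add: neutral_expert_profile held_expert_profile[OF assms(2) Q] expert_profile_def)
qed

end
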